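(* Let $q\ge 1$, let $P\in\mathcal{P}_q$, and let $d_{\mathrm{pLip}_{1,q-1}}(P,Q)=\sup_{f\in\mathrm{pLip}_{1,q-1}}|\mathbb{E}_{X\sim P}[f(X)]-\mathbb{E}_{Y\sim Q}[f(Y)]|$. For a sequence of probability measures $Q_1,Q_2,\dots\in\mathcal{P}_q$ the following are equivalent: (a) $d_{\mathrm{pLip}_{1,q-1}}(Q_n,P)\to0$; (b) $Q_n$ converges weakly to $P$ and $\mathbb{E}_{X\sim Q_n}[\|X\|_2^q]\to\mathbb{E}_{X\sim P}[\|X\|_2^q]$.
   Context: A function $h:\mathbb{R}^D\to\mathbb{R}$ is pseudo-Lipschitz of order $r\ge0$ if there is $C>0$ with $|h(x)-h(y)|\le C(1+\|x\|_2^r+\|y\|_2^r)\|x-y\|_2$ for all $x,y\in\mathbb{R}^D$; the smallest such $C$ is $\tilde\mu_{\mathrm{pLip}}(h)_{1,r}$. $\mathrm{pLip}_{1,r}$ is the set of pseudo-Lipschitz functions of order $r$ with $\tilde\mu_{\mathrm{pLip}}(h)_{1,r}\le1$. $\mathcal{P}_q$ is the set of probability measures on $\mathbb{R}^D$ with finite $q$-th moment $\int\|x\|_2^q d\mu<\infty$. *)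

theory Defs
  imports "HOL-Analysis.Analysis" "HOL-Probability.Probability"
begin

definition npow :: "'a::real_normed_vector \<Rightarrow> real \<Rightarrow> real" where
  "npow x r = (if r = 0 then 1 else norm x powr r)"

definition pseudo_lipschitz :: "real \<Rightarrow> real \<Rightarrow> ('a::euclidean_space \<Rightarrow> real) \<Rightarrow> bool" where
  "pseudo_lipschitz r C h \<longleftrightarrow>
     (\<forall>x y. \<bar>h x - h y\<bar> \<le> C * (1 + npow x r + npow y r) * norm (x - y))"

text \<open>Smallest pseudo-Lipschitz constant (the infimum is attained, the condition being closed in C).\<close>
definition pLip_const :: "real \<Rightarrow> ('a::euclidean_space \<Rightarrow> real) \<Rightarrow> real" where
  "pLip_const r h = Inf {C. C > 0 \<and> pseudo_lipschitz r C h}"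

definition pLip :: "real \<Rightarrow> ('a::euclidean_space \<Rightarrow> real) set" where
  "pLip r = {h. (\<exists>C>0. pseudo_lipschitz r C h) \<and> pLip_const r h \<le> 1}"

definition Pq :: "real \<Rightarrow> 'a::euclidean_space measure set" where
  "Pq q = {M. prob_space M \<and> sets M = sets borel \<and> integrable M (\<lambda>x. norm x powr q)}"

definition d_pLip :: "real \<Rightarrow> 'a::euclidean_space measure \<Rightarrow> 'a measure \<Rightarrow> real" where
  "d_pLip r P Q = (SUP f \<in> pLip r. \<bar>(\<integral>x. f x \<partial>P) - (\<integral>y. f y \<partial>Q)\<bar>)"

definition weak_conv_seq :: "(nat \<Rightarrow> 'a::euclidean_space measure) \<Rightarrow> 'a measure \<Rightarrow> bool" where
  "weak_conv_seq Q P \<longleftrightarrow>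
     (\<forall>f :: 'a \<Rightarrow> real. continuous_on UNIV f \<and> bounded (range f) \<longrightarrow>
        (\<lambda>n. \<integral>x. f x \<partial>(Q n)) \<longlonglongrightarrow> (\<integral>x. f x \<partial>P))"

end

theory Submission
  imports Defs
begin

text \<open>
Write w(x) = 1 + \<parallel>x\<parallel>^q. Every f in pLip_{1,q-1} satisfies |f x - f 0| \<le> 3 w(x), and \<parallel>x\<parallel>^q
is itself pseudo-Lipschitz of order q - 1 with constant q, so convergence in d_pLip forces
convergence of the q-th moments. For weak convergence, a bounded continuous f is approximated from
below by its Lipschitz inf-convolutions inf_y (f y + k \<parallel>x - y\<parallel>), which increase to f as k \<rightarrow> \<infinity>;
applied to f and -f this squeezes \<integral> f dQ_n.

Conversely, take a finite \<delta>-net K of a ball of radius R outside which \<integral> w dP is small, and a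
continuous partition of unity (\<psi>_k) subordinate to the 2\<delta>-balls around the net points. Uniformly
in f \<in> pLip, |f - f 0 - \<Sum>_k (f k - f 0) \<psi>_k| \<le> O(\<delta>) + 3 w (1 - \<Sum>_k \<psi>_k). Integrating against
Q_n and P bounds d_pLip(Q_n, P) by O(\<delta>), the tail weights \<integral> w (1 - \<Sum>_k \<psi>_k) of Q_n and P, and
finitely many differences |\<integral> \<psi>_k dQ_n - \<integral> \<psi>_k dP|. Weak convergence and convergence of the
moments make the tail weight of Q_n tend to that of P, which is small, and the differences tend
to 0.
\<close>

lemma powr_le_1_plus_powr:
  fixes a p q :: real
  assumes "0 \<le> a" "0 \<le> p" "p \<le> q"
  shows "a powr p \<le> 1 + a powr q"
proof (cases "a \<le> 1")
  case True
  then have "a powr p \<le> 1" using assms by (simp add: powr_le1)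
  then show ?thesis by (simp add: add_increasing2)
next
  case False
  then have "a powr p \<le> a powr q" using assms by (intro powr_mono) auto
  then show ?thesis by simp
qed

lemma npow_nonneg: "npow x r \<ge> 0"
  by (simp add: npow_def)

lemma norm_powr_le_npow: "norm x powr r \<le> npow x r"
  by (simp add: npow_def)

lemma npow_le_1_plus_powr: "q \<ge> 1 \<Longrightarrow> npow x (q - 1) \<le> 1 + norm x powr q"
  using powr_le_1_plus_powr[of "norm x" "q - 1" q] by (simp add: npow_def)

lemma npow_mult_norm: "q \<ge> 1 \<Longrightarrow> npow x (q - 1) * norm x = norm x powr q"
  using powr_mult_base[of "norm x" "q - 1"] by (cases "x = 0") (auto simp: npow_def mult.commute)

section \<open>Pseudo-Lipschitz functions\<close>

lemma pseudo_lipschitz_mono: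
  fixes h :: "'a::euclidean_space \<Rightarrow> real"
  assumes "pseudo_lipschitz r C h" "C \<le> C'"
  shows "pseudo_lipschitz r C' h"
  unfolding pseudo_lipschitz_def
proof (intro allI)
  fix x y :: 'a
  have "\<bar>h x - h y\<bar> \<le> C * ((1 + npow x r + npow y r) * norm (x - y))"
    using assms(1) unfolding pseudo_lipschitz_def by (simp add: mult.assoc)
  also have "\<dots> \<le> C' * ((1 + npow x r + npow y r) * norm (x - y))"
    using npow_nonneg[of x r] npow_nonneg[of y r] by (intro mult_right_mono[OF assms(2)]) simp
  finally show "\<bar>h x - h y\<bar> \<le> C' * (1 + npow x r + npow y r) * norm (x - y)"
    by (simp add: mult.assoc)
qed

lemma pseudo_lipschitz_at_infimum:
  fixes h :: "'a::euclidean_space \<Rightarrow> real"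
  assumes "\<And>C. C > C\<^sub>0 \<Longrightarrow> pseudo_lipschitz r C h"
  shows "pseudo_lipschitz r C\<^sub>0 h"
  unfolding pseudo_lipschitz_def
proof (intro allI)
  fix x y :: 'a
  define W where "W = (1 + npow x r + npow y r) * norm (x - y)"
  have W: "W \<ge> 0" unfolding W_def using npow_nonneg[of x r] npow_nonneg[of y r] by simp
  have "\<bar>h x - h y\<bar> \<le> C\<^sub>0 * W + e" if "e > 0" for e
  proof -
    have "pseudo_lipschitz r (C\<^sub>0 + e / (W + 1)) h" using assms W that by simp
    then have "\<bar>h x - h y\<bar> \<le> (C\<^sub>0 + e / (W + 1)) * W"
      unfolding pseudo_lipschitz_def W_def by (simp add: mult.assoc)
    also have "\<dots> \<le> C\<^sub>0 * W + e" using W that by (simp add: field_simps)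
    finally show ?thesis .
  qed
  then show "\<bar>h x - h y\<bar> \<le> C\<^sub>0 * (1 + npow x r + npow y r) * norm (x - y)"
    unfolding W_def mult.assoc by (rule field_le_epsilon)
qed

lemma pLip_iff:
  fixes h :: "'a::euclidean_space \<Rightarrow> real"
  shows "h \<in> pLip r \<longleftrightarrow> pseudo_lipschitz r 1 h"
proof
  let ?S = "{C. C > 0 \<and> pseudo_lipschitz r C h}"
  assume "h \<in> pLip r"
  then have ne: "?S \<noteq> {}" and Inf: "Inf ?S \<le> 1" unfolding pLip_def pLip_const_def by blast+
  have "pseudo_lipschitz r C h" if "C > 1" for C
  proof -
    have "bdd_below ?S" by (auto intro!: bdd_belowI[where m=0])
    moreover have "Inf ?S < C" using Inf that by simp
    ultimately obtain C' where "C' \<in> ?S" "C' < C" using cInf_less_iff[OF ne] by auto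
    then show ?thesis using pseudo_lipschitz_mono[of r C' h C] by auto
  qed
  then show "pseudo_lipschitz r 1 h" by (rule pseudo_lipschitz_at_infimum)
next
  assume "pseudo_lipschitz r 1 h"
  then show "h \<in> pLip r"
    unfolding pLip_def pLip_const_def by (auto intro!: cInf_lower bdd_belowI[where m=0] exI[of _ 1])
qed

lemma pseudo_lipschitz_divide:
  fixes h :: "'a::euclidean_space \<Rightarrow> real"
  assumes "pseudo_lipschitz r C h" "c > 0"
  shows "pseudo_lipschitz r (C / c) (\<lambda>x. h x / c)"
  unfolding pseudo_lipschitz_def
proof (intro allI)
  fix x y :: 'a
  have "\<bar>h x / c - h y / c\<bar> = \<bar>h x - h y\<bar> / c"
    using assms(2) by (simp add: diff_divide_distrib[symmetric])
  also have "\<dots> \<le> C * (1 + npow x r + npow y r) * norm (x - y) / c"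
    using assms unfolding pseudo_lipschitz_def by (simp add: divide_right_mono)
  finally show "\<bar>h x / c - h y / c\<bar> \<le> C / c * (1 + npow x r + npow y r) * norm (x - y)"
    by simp
qed

lemma lipschitz_imp_pseudo_lipschitz:
  fixes h :: "'a::euclidean_space \<Rightarrow> real"
  assumes "C-lipschitz_on UNIV h"
  shows "pseudo_lipschitz r C h"
  unfolding pseudo_lipschitz_def
proof (intro allI)
  fix x y :: 'a
  have "\<bar>h x - h y\<bar> \<le> C * 1 * norm (x - y)"
    using lipschitz_onD[OF assms] by (simp add: dist_real_def dist_norm)
  also have "\<dots> \<le> C * (1 + npow x r + npow y r) * norm (x - y)"
    using lipschitz_on_nonneg[OF assms] npow_nonneg[of x r] npow_nonneg[of y r]
    by (intro mult_right_mono mult_left_mono) auto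
  finally show "\<bar>h x - h y\<bar> \<le> C * (1 + npow x r + npow y r) * norm (x - y)" .
qed

lemma pseudo_lipschitz_growth:
  fixes h :: "'a::euclidean_space \<Rightarrow> real"
  assumes "pseudo_lipschitz (q - 1) C h" "q \<ge> 1" "C \<ge> 0"
  shows "\<bar>h x - h 0\<bar> \<le> 3 * C * (1 + norm x powr q)"
proof -
  have "\<bar>h x - h 0\<bar> \<le> C * (1 + npow x (q - 1) + npow (0::'a) (q - 1)) * norm x"
    using assms(1)[unfolded pseudo_lipschitz_def, rule_format, of x 0] by simp
  also have "\<dots> \<le> C * (2 + npow x (q - 1)) * norm x"
    using assms(3) by (intro mult_right_mono mult_left_mono) (auto simp: npow_def)
  also have "\<dots> = C * (2 * norm x + norm x powr q)"
    using npow_mult_norm[OF assms(2), of x] by (simp add: algebra_simps)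
  also have "\<dots> \<le> C * (3 * (1 + norm x powr q))"
    using powr_le_1_plus_powr[of "norm x" 1 q] assms by (intro mult_left_mono) auto
  finally show ?thesis by (simp add: algebra_simps)
qed

lemma pseudo_lipschitz_on_cball:
  fixes h :: "'a::euclidean_space \<Rightarrow> real"
  assumes "pseudo_lipschitz (q - 1) C h" "q \<ge> 1" "C \<ge> 0"
  shows "(C * (3 + 2 * R powr q))-lipschitz_on (cball 0 R) h"
proof (rule lipschitz_onI)
  fix x y :: 'a assume "x \<in> cball 0 R" "y \<in> cball 0 R"
  then have "norm x powr q \<le> R powr q" "norm y powr q \<le> R powr q"
    using assms(2) by (auto intro!: powr_mono2)
  then have "1 + npow x (q - 1) + npow y (q - 1) \<le> 3 + 2 * R powr q"
    using npow_le_1_plus_powr[OF assms(2), of x] npow_le_1_plus_powr[OF assms(2), of y] by simp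
  then have "C * (1 + npow x (q - 1) + npow y (q - 1)) * norm (x - y)
      \<le> C * (3 + 2 * R powr q) * norm (x - y)"
    using assms(3) by (intro mult_right_mono mult_left_mono) auto
  then show "dist (h x) (h y) \<le> C * (3 + 2 * R powr q) * dist x y"
    using assms(1) unfolding pseudo_lipschitz_def dist_real_def dist_norm by (meson order_trans)
qed (use assms(3) in simp)

lemma pseudo_lipschitz_continuous:
  fixes h :: "'a::euclidean_space \<Rightarrow> real"
  assumes "pseudo_lipschitz (q - 1) C h" "q \<ge> 1" "C \<ge> 0"
  shows "continuous_on UNIV h"
proof -
  have "isCont h x" for x
  proof -
    have "continuous_on (ball 0 (norm x + 1)) h"
      using lipschitz_on_continuous_on[OF pseudo_lipschitz_on_cball[OF assms, of "norm x + 1"]]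
      by (rule continuous_on_subset) auto
    then show ?thesis by (simp add: continuous_on_eq_continuous_at)
  qed
  then show ?thesis by (simp add: continuous_at_imp_continuous_on)
qed

lemma
  assumes "M \<in> Pq q"
  shows Pq_prob_space: "prob_space M" and sets_Pq: "sets M = sets borel"
    and integrable_Pq_norm_powr: "integrable M (\<lambda>x. norm x powr q)"
  using assms unfolding Pq_def by auto

lemma measurable_Pq:
  fixes g :: "'a::euclidean_space \<Rightarrow> 'b::topological_space"
  assumes "M \<in> Pq q" "g \<in> borel_measurable borel"
  shows "g \<in> borel_measurable M"
proof -
  have "(borel_measurable M :: ('a \<Rightarrow> 'b) set) = borel_measurable borel"
    by (rule measurable_cong_sets) (simp_all add: sets_Pq[OF assms(1)])
  then show ?thesis using assms(2) by simp
qed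

lemma integrable_Pq_const:
  assumes "M \<in> Pq q"
  shows "integrable M (\<lambda>x. c :: real)"
  using Pq_prob_space[OF assms] by (simp add: prob_space_def finite_measure.integrable_const)

lemma integral_Pq_const:
  assumes "M \<in> Pq q"
  shows "(\<integral>x. c \<partial>M) = (c :: real)"
  using prob_space.prob_space[OF Pq_prob_space[OF assms]] by simp

lemma integral_Pq_weight:
  "M \<in> Pq q \<Longrightarrow> (\<integral>x. a + b * norm x powr q \<partial>M) = a + b * (\<integral>x. norm x powr q \<partial>M)"
  using integrable_Pq_const integrable_Pq_norm_powr integral_Pq_const by fastforce

lemma integrable_Pq_dominated:
  fixes g :: "'a::euclidean_space \<Rightarrow> real"
  assumes "M \<in> Pq q" "g \<in> borel_measurable borel" "\<And>x. \<bar>g x\<bar> \<le> a + b * norm x powr q"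
  shows "integrable M g"
proof (rule Bochner_Integration.integrable_bound)
  show "integrable M (\<lambda>x. a + b * norm x powr q)"
    using integrable_Pq_const[OF assms(1)] integrable_Pq_norm_powr[OF assms(1)] by auto
  show "g \<in> borel_measurable M" using measurable_Pq[OF assms(1,2)] .
  show "AE x in M. norm (g x) \<le> norm (a + b * norm x powr q)"
    using assms(3) by (auto intro!: AE_I2 order_trans[OF _ abs_ge_self])
qed

lemma integrable_Pq_bounded_continuous:
  fixes g :: "'a::euclidean_space \<Rightarrow> real"
  assumes "M \<in> Pq q" "continuous_on UNIV g" "\<And>x. \<bar>g x\<bar> \<le> B"
  shows "integrable M g"
  using assms by (intro integrable_Pq_dominated[of M q g B 0] borel_measurable_continuous_onI) auto

lemma integrable_pseudo_lipschitz:
  assumes "M \<in> Pq q" "q \<ge> 1" "pseudo_lipschitz (q - 1) C h" "C \<ge> 0"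
  shows "integrable M h"
proof (rule integrable_Pq_dominated[OF assms(1), of h "\<bar>h 0\<bar> + 3 * C" "3 * C"])
  show "h \<in> borel_measurable borel"
    using pseudo_lipschitz_continuous[OF assms(3,2,4)] by (rule borel_measurable_continuous_onI)
  show "\<bar>h x\<bar> \<le> \<bar>h 0\<bar> + 3 * C + 3 * C * norm x powr q" for x
    using pseudo_lipschitz_growth[OF assms(3,2,4), of x] by (simp add: distrib_left)
qed

lemma abs_integral_pLip_le:
  assumes "M \<in> Pq q" "q \<ge> 1" "f \<in> pLip (q - 1)"
  shows "\<bar>(\<integral>x. f x \<partial>M) - f 0\<bar> \<le> 3 + 3 * (\<integral>x. norm x powr q \<partial>M)"
proof -
  have PL: "pseudo_lipschitz (q - 1) 1 f" using assms(3) by (simp add: pLip_iff)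
  have f: "integrable M f" using integrable_pseudo_lipschitz[OF assms(1,2) PL] by simp
  have "(\<integral>x. f x \<partial>M) - f 0 = (\<integral>x. f x - f 0 \<partial>M)"
    using f integrable_Pq_const[OF assms(1)] integral_Pq_const[OF assms(1)] by simp
  also have "\<bar>\<dots>\<bar> \<le> (\<integral>x. 3 + 3 * norm x powr q \<partial>M)"
  proof (rule integral_abs_bound_integral)
    show "integrable M (\<lambda>x. f x - f 0)" using f integrable_Pq_const[OF assms(1)] by simp
    show "integrable M (\<lambda>x. 3 + 3 * norm x powr q)"
      using integrable_Pq_const[OF assms(1)] integrable_Pq_norm_powr[OF assms(1)] by simp
    show "\<bar>f x - f 0\<bar> \<le> 3 + 3 * norm x powr q" for x
      using pseudo_lipschitz_growth[OF PL assms(2), of x] by simp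
  qed
  finally show ?thesis using integral_Pq_weight[OF assms(1)] by simp
qed

lemma bdd_above_d_pLip:
  fixes M N :: "'a::euclidean_space measure"
  assumes "M \<in> Pq q" "N \<in> Pq q" "q \<ge> 1"
  shows "bdd_above ((\<lambda>f. \<bar>(\<integral>x. f x \<partial>M) - (\<integral>x. f x \<partial>N)\<bar>) ` pLip (q - 1))"
proof (rule bdd_aboveI2)
  fix f :: "'a \<Rightarrow> real" assume "f \<in> pLip (q - 1)"
  then show "\<bar>(\<integral>x. f x \<partial>M) - (\<integral>x. f x \<partial>N)\<bar>
      \<le> (3 + 3 * (\<integral>x. norm x powr q \<partial>M)) + (3 + 3 * (\<integral>x. norm x powr q \<partial>N))"
    using abs_integral_pLip_le[OF assms(1,3)] abs_integral_pLip_le[OF assms(2,3)] by fastforce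
qed

lemma d_pLip_ge:
  assumes "M \<in> Pq q" "N \<in> Pq q" "q \<ge> 1" "f \<in> pLip (q - 1)"
  shows "\<bar>(\<integral>x. f x \<partial>M) - (\<integral>x. f x \<partial>N)\<bar> \<le> d_pLip (q - 1) M N"
  unfolding d_pLip_def by (rule cSUP_upper[OF assms(4) bdd_above_d_pLip[OF assms(1-3)]])

lemma zero_in_pLip: "(\<lambda>x. 0) \<in> pLip r"
  by (auto simp: pLip_iff pseudo_lipschitz_def npow_nonneg)

lemma d_pLip_nonneg:
  assumes "M \<in> Pq q" "N \<in> Pq q" "q \<ge> 1"
  shows "0 \<le> d_pLip (q - 1) M N"
  using d_pLip_ge[OF assms zero_in_pLip] by simp

lemma d_pLip_le:
  assumes "\<And>f. f \<in> pLip r \<Longrightarrow> \<bar>(\<integral>x. f x \<partial>M) - (\<integral>x. f x \<partial>N)\<bar> \<le> B"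
  shows "d_pLip r M N \<le> B"
  unfolding d_pLip_def using zero_in_pLip assms by (intro cSUP_least) auto

lemma d_pLip_scaled:
  assumes "M \<in> Pq q" "N \<in> Pq q" "q \<ge> 1" "pseudo_lipschitz (q - 1) C h" "C > 0"
  shows "\<bar>(\<integral>x. h x \<partial>M) - (\<integral>x. h x \<partial>N)\<bar> \<le> C * d_pLip (q - 1) M N"
proof -
  have "(\<lambda>x. h x / C) \<in> pLip (q - 1)"
    using pseudo_lipschitz_divide[OF assms(4,5)] assms(5) by (simp add: pLip_iff)
  from d_pLip_ge[OF assms(1-3) this]
  have "\<bar>(\<integral>x. h x \<partial>M) - (\<integral>x. h x \<partial>N)\<bar> / C \<le> d_pLip (q - 1) M N"
    using assms(5) by (simp add: diff_divide_distrib[symmetric])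
  then show ?thesis using assms(5) by (simp add: divide_le_eq mult.commute)
qed

section \<open>Convergence of moments\<close>

lemma powr_diff_le:
  fixes a b q :: real
  assumes "0 \<le> b" "b \<le> a" "q \<ge> 1"
  shows "a powr q - b powr q \<le> q * a powr (q - 1) * (a - b)"
proof (cases "b = 0")
  case True
  have "a powr q = a powr (q - 1) * a"
    using powr_mult_base[of a "q - 1"] assms by (simp add: mult.commute)
  also have "\<dots> \<le> q * a powr (q - 1) * a"
    using assms mult_right_mono[of 1 q "a powr (q - 1) * a"] by (simp add: mult.assoc)
  finally show ?thesis using True by simp
next
  case False
  show ?thesis
  proof (cases "b = a")
    case False
    then have "b < a" using assms by simp
    have der: "((\<lambda>z. z powr q) has_real_derivative q * z powr (q - 1)) (at z)"
      if "b \<le> z" "z \<le> a" for z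
      using that \<open>b \<noteq> 0\<close> assms(1) by (intro has_real_derivative_powr) simp
    obtain z where z: "b < z" "z < a" "a powr q - b powr q = (a - b) * (q * z powr (q - 1))"
      using MVT2[OF \<open>b < a\<close> der] by blast
    have "z powr (q - 1) \<le> a powr (q - 1)" using z assms by (intro powr_mono2) auto
    then have "(a - b) * (q * z powr (q - 1)) \<le> (a - b) * (q * a powr (q - 1))"
      using z assms by (intro mult_left_mono) auto
    then show ?thesis using z by (simp add: algebra_simps)
  qed simp
qed

lemma pseudo_lipschitz_norm_powr:
  assumes "q \<ge> 1"
  shows "pseudo_lipschitz (q - 1) q (\<lambda>x::'a::euclidean_space. norm x powr q)"
proof -
  have le: "\<bar>norm x powr q - norm y powr q\<bar> \<le> q * (1 + npow x (q - 1) + npow y (q - 1)) * norm (x - y)"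
    if "norm y \<le> norm x" for x y :: 'a
  proof -
    have "\<bar>norm x powr q - norm y powr q\<bar> = norm x powr q - norm y powr q"
      using that assms by (simp add: powr_mono2)
    also have "\<dots> \<le> q * norm x powr (q - 1) * (norm x - norm y)"
      using that assms by (intro powr_diff_le) auto
    also have "\<dots> \<le> q * (1 + npow x (q - 1) + npow y (q - 1)) * norm (x - y)"
      using assms that norm_powr_le_npow[of x "q - 1"] npow_nonneg[of x "q - 1"] npow_nonneg[of y "q - 1"]
        norm_triangle_ineq2[of x y]
      by (intro mult_mono mult_left_mono) auto
    finally show ?thesis .
  qed
  show ?thesis
    unfolding pseudo_lipschitz_def
  proof (intro allI)
    fix x y :: 'a
    show "\<bar>norm x powr q - norm y powr q\<bar> \<le> q * (1 + npow x (q - 1) + npow y (q - 1)) * norm (x - y)"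
    proof (cases "norm y \<le> norm x")
      case False
      then have "\<bar>norm y powr q - norm x powr q\<bar> \<le> q * (1 + npow y (q - 1) + npow x (q - 1)) * norm (y - x)"
        by (intro le) simp
      then show ?thesis by (simp only: abs_minus_commute norm_minus_commute add_ac)
    qed (rule le)
  qed
qed

lemma tendsto_moment_of_d_pLip:
  assumes q1: "q \<ge> 1" and P: "P \<in> Pq q" and Q: "\<And>n. Q n \<in> Pq q"
    and d: "(\<lambda>n. d_pLip (q - 1) (Q n) P) \<longlonglongrightarrow> 0"
  shows "(\<lambda>n. \<integral>x. norm x powr q \<partial>(Q n)) \<longlonglongrightarrow> (\<integral>x. norm x powr q \<partial>P)"
proof -
  have "\<forall>n. norm ((\<integral>x. norm x powr q \<partial>(Q n)) - (\<integral>x. norm x powr q \<partial>P))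
      \<le> q * d_pLip (q - 1) (Q n) P"
    using d_pLip_scaled[OF Q P q1 pseudo_lipschitz_norm_powr[OF q1]] q1 by simp
  from Lim_null_comparison[OF always_eventually[OF this] tendsto_mult_right_zero[OF d]]
  show ?thesis by (simp add: LIM_zero_iff)
qed

section \<open>Weak convergence from convergence in d_pLip\<close>

definition inf_convolution :: "('a::metric_space \<Rightarrow> real) \<Rightarrow> real \<Rightarrow> 'a \<Rightarrow> real" where
  "inf_convolution f k x = (INF y. f y + k * dist x y)"

lemma bdd_below_inf_convolution:
  assumes "\<And>u. B \<le> f u" "k \<ge> 0"
  shows "bdd_below (range (\<lambda>y. f y + k * dist x y))"
  using assms by (intro bdd_belowI2[where m=B]) (simp add: add_increasing2)

lemma inf_convolution_le:
  assumes "\<And>u. B \<le> f u" "k \<ge> 0"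
  shows "inf_convolution f k x \<le> f x"
proof -
  have "inf_convolution f k x \<le> f x + k * dist x x"
    unfolding inf_convolution_def by (rule cINF_lower[OF bdd_below_inf_convolution[OF assms]]) simp
  then show ?thesis by simp
qed

lemma inf_convolution_ge:
  assumes "\<And>u. B \<le> f u" "k \<ge> 0"
  shows "B \<le> inf_convolution f k x"
  unfolding inf_convolution_def using assms by (intro cINF_greatest) (auto intro: add_increasing2)

lemma lipschitz_inf_convolution:
  assumes "\<And>u. B \<le> f u" "k \<ge> 0"
  shows "k-lipschitz_on UNIV (inf_convolution f k)"
proof -
  have le: "inf_convolution f k x \<le> inf_convolution f k z + k * dist x z" for x z
  proof -
    have "inf_convolution f k x - k * dist x z \<le> f y + k * dist z y" for y
    proof -
      have "inf_convolution f k x \<le> f y + k * dist x y"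
        unfolding inf_convolution_def by (rule cINF_lower[OF bdd_below_inf_convolution[OF assms]]) simp
      moreover have "k * dist x y \<le> k * dist z y + k * dist x z"
        using dist_triangle[of x y z] assms(2) by (simp add: distrib_left[symmetric] mult_left_mono)
      ultimately show ?thesis by linarith
    qed
    then have "inf_convolution f k x - k * dist x z \<le> inf_convolution f k z"
      unfolding inf_convolution_def[of f k z] by (intro cINF_greatest) auto
    then show ?thesis by linarith
  qed
  show ?thesis
  proof (rule lipschitz_onI)
    show "dist (inf_convolution f k x) (inf_convolution f k y) \<le> k * dist x y" for x y
      using le[of x y] le[of y x] by (simp add: dist_real_def dist_commute abs_le_iff)
  qed (rule assms(2))
qed

lemma tendsto_inf_convolution:
  assumes "\<And>u. \<bar>f u\<bar> \<le> B" "continuous_on UNIV f"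
  shows "(\<lambda>n. inf_convolution f (real n) x) \<longlonglongrightarrow> f x"
proof (rule LIMSEQ_I)
  fix e :: real assume e: "e > 0"
  have lower: "- B \<le> f u" for u using assms(1)[of u] by linarith
  have "isCont f x" using assms(2) by (simp add: continuous_on_eq_continuous_at)
  then obtain d where d: "d > 0" "\<And>y. dist y x < d \<Longrightarrow> dist (f y) (f x) < e / 2"
    unfolding continuous_at_eps_delta using e by (meson half_gt_zero)
  obtain N :: nat where N: "real N > 2 * B / d" using reals_Archimedean2 by blast
  show "\<exists>no. \<forall>n\<ge>no. norm (inf_convolution f (real n) x - f x) < e"
  proof (intro exI allI impI)
    fix n assume "N \<le> n"
    then have "real N * d \<le> real n * d" using d(1) by (intro mult_right_mono) auto
    moreover have "2 * B < real N * d" using N d(1) by (simp add: field_simps)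
    ultimately have nd: "real n * d \<ge> 2 * B" by linarith
    have "f x - e / 2 < f y + real n * dist x y" for y
    proof (cases "dist y x < d")
      case True
      have "\<bar>f y - f x\<bar> < e / 2" using d(2)[OF True] by (simp add: dist_real_def)
      moreover have "0 \<le> real n * dist x y" by simp
      ultimately show ?thesis by linarith
    next
      case False
      then have "real n * d \<le> real n * dist x y" by (simp add: dist_commute mult_left_mono)
      then show ?thesis using nd assms(1)[of x] assms(1)[of y] e by (simp add: abs_le_iff)
    qed
    then have "f x - e / 2 \<le> inf_convolution f (real n) x"
      unfolding inf_convolution_def by (intro cINF_greatest) (auto intro: less_imp_le)
    moreover have "inf_convolution f (real n) x \<le> f x" using inf_convolution_le[of "- B" f, OF lower] by simp
    ultimately show "norm (inf_convolution f (real n) x - f x) < e" using e by simp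
  qed
qed

lemma lipschitz_approx_below:
  fixes f :: "'a::euclidean_space \<Rightarrow> real"
  assumes P: "P \<in> Pq q" and f: "\<And>u. \<bar>f u\<bar> \<le> B" "continuous_on UNIV f" and e: "e > 0"
  obtains g K where "K-lipschitz_on UNIV g" "\<And>x. g x \<le> f x" "(\<integral>x. g x \<partial>P) > (\<integral>x. f x \<partial>P) - e"
proof -
  have lower: "- B \<le> f u" for u using f(1)[of u] by linarith
  have lip: "(real n)-lipschitz_on UNIV (inf_convolution f (real n))" for n
    using lipschitz_inf_convolution[of "- B" f, OF lower] by simp
  have "(\<lambda>n. \<integral>x. inf_convolution f (real n) x \<partial>P) \<longlonglongrightarrow> (\<integral>x. f x \<partial>P)"
  proof (rule integral_dominated_convergence[where w="\<lambda>x. B"])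
    show "f \<in> borel_measurable P"
      using measurable_Pq[OF P borel_measurable_continuous_onI[OF f(2)]] .
    show "inf_convolution f (real n) \<in> borel_measurable P" for n
      using measurable_Pq[OF P borel_measurable_continuous_onI[OF lipschitz_on_continuous_on[OF lip]]] .
    show "integrable P (\<lambda>x. B)" using integrable_Pq_const[OF P] .
    show "AE x in P. (\<lambda>n. inf_convolution f (real n) x) \<longlonglongrightarrow> f x"
      using tendsto_inf_convolution[OF f] by simp
    show "AE x in P. norm (inf_convolution f (real n) x) \<le> B" for n
    proof (rule AE_I2)
      fix x
      show "norm (inf_convolution f (real n) x) \<le> B"
        using inf_convolution_le[of "- B" f, OF lower, of "real n" x] f(1)[of x]
          inf_convolution_ge[of "- B" f, OF lower, of "real n" x] by simp
    qed
  qed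
  then have "eventually (\<lambda>n. (\<integral>x. inf_convolution f (real n) x \<partial>P) > (\<integral>x. f x \<partial>P) - e) sequentially"
    using e by (intro order_tendstoD(1)) auto
  then obtain n where "(\<integral>x. inf_convolution f (real n) x \<partial>P) > (\<integral>x. f x \<partial>P) - e"
    by (meson eventually_sequentially order_refl)
  then show ?thesis using that[OF lip] inf_convolution_le[of "- B" f, OF lower] by simp
qed

lemma eventually_integral_gt_of_d_pLip:
  fixes f :: "'a::euclidean_space \<Rightarrow> real"
  assumes q1: "q \<ge> 1" and P: "P \<in> Pq q" and Q: "\<And>n. Q n \<in> Pq q"
    and d: "(\<lambda>n. d_pLip (q - 1) (Q n) P) \<longlonglongrightarrow> 0"
    and f: "\<And>u. \<bar>f u\<bar> \<le> B" "continuous_on UNIV f" and e: "e > 0"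
  shows "eventually (\<lambda>n. (\<integral>x. f x \<partial>Q n) > (\<integral>x. f x \<partial>P) - e) sequentially"
proof -
  obtain g K where g: "K-lipschitz_on UNIV g" "\<And>x. g x \<le> f x"
    "(\<integral>x. g x \<partial>P) > (\<integral>x. f x \<partial>P) - e / 2"
    using lipschitz_approx_below[OF P f half_gt_zero[OF e]] by blast
  have K: "K + 1 > 0" using lipschitz_on_nonneg[OF g(1)] by simp
  have PL: "pseudo_lipschitz (q - 1) (K + 1) g"
    by (rule lipschitz_imp_pseudo_lipschitz[OF lipschitz_on_mono[OF g(1)]]) auto
  have "eventually (\<lambda>n. d_pLip (q - 1) (Q n) P < e / 2 / (K + 1)) sequentially"
    using d e K by (intro order_tendstoD(2)) auto
  then show ?thesis
  proof (rule eventually_mono)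
    fix n assume dn: "d_pLip (q - 1) (Q n) P < e / 2 / (K + 1)"
    have "(\<integral>x. g x \<partial>Q n) \<le> (\<integral>x. f x \<partial>Q n)"
      using integrable_pseudo_lipschitz[OF Q q1 PL] K integrable_Pq_bounded_continuous[OF Q f(2,1)] g(2)
      by (intro integral_mono) auto
    moreover have "\<bar>(\<integral>x. g x \<partial>Q n) - (\<integral>x. g x \<partial>P)\<bar> \<le> (K + 1) * d_pLip (q - 1) (Q n) P"
      by (rule d_pLip_scaled[OF Q P q1 PL K])
    moreover have "(K + 1) * d_pLip (q - 1) (Q n) P < e / 2"
      using dn K by (simp add: field_simps)
    ultimately show "(\<integral>x. f x \<partial>Q n) > (\<integral>x. f x \<partial>P) - e" using g(3) by linarith
  qed
qed

lemma weak_conv_of_d_pLip: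
  fixes P :: "'a::euclidean_space measure"
  assumes "q \<ge> 1" "P \<in> Pq q" "\<And>n. Q n \<in> Pq q" "(\<lambda>n. d_pLip (q - 1) (Q n) P) \<longlonglongrightarrow> 0"
  shows "weak_conv_seq Q P"
  unfolding weak_conv_seq_def
proof (intro allI impI)
  fix f :: "'a \<Rightarrow> real"
  assume "continuous_on UNIV f \<and> bounded (range f)"
  then obtain B where f: "\<And>u. \<bar>f u\<bar> \<le> B" "continuous_on UNIV f" by (auto simp: bounded_iff)
  have minus_f: "\<And>u. \<bar>- f u\<bar> \<le> B" "continuous_on UNIV (\<lambda>x. - f x)"
    using f by (auto intro: continuous_intros)
  show "(\<lambda>n. \<integral>x. f x \<partial>Q n) \<longlonglongrightarrow> (\<integral>x. f x \<partial>P)"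
  proof (rule order_tendstoI)
    fix a assume "a < (\<integral>x. f x \<partial>P)"
    then show "eventually (\<lambda>n. a < (\<integral>x. f x \<partial>Q n)) sequentially"
      using eventually_integral_gt_of_d_pLip[OF assms f, of "(\<integral>x. f x \<partial>P) - a"] by simp
  next
    fix a assume "(\<integral>x. f x \<partial>P) < a"
    then show "eventually (\<lambda>n. (\<integral>x. f x \<partial>Q n) < a) sequentially"
      using eventually_integral_gt_of_d_pLip[OF assms minus_f, of "a - (\<integral>x. f x \<partial>P)"] by simp
  qed
qed

lemma weak_conv_seqD:
  fixes g :: "'a::euclidean_space \<Rightarrow> real"
  assumes "weak_conv_seq Q P" "continuous_on UNIV g" "\<And>x. \<bar>g x\<bar> \<le> B"
  shows "(\<lambda>n. \<integral>x. g x \<partial>Q n) \<longlonglongrightarrow> (\<integral>x. g x \<partial>P)"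
proof -
  have "bounded (range g)" unfolding bounded_iff by (rule exI[of _ B]) (simp add: assms(3))
  then show ?thesis using assms(1,2) unfolding weak_conv_seq_def by blast
qed

section \<open>Convergence in d_pLip from weak convergence and convergence of moments\<close>

lemma compact_finite_net:
  fixes S :: "'a::metric_space set"
  assumes "compact S" "d > 0"
  obtains K where "K \<subseteq> S" "finite K" "S \<subseteq> (\<Union>k\<in>K. ball k d)"
proof -
  have "S \<subseteq> (\<Union>k\<in>S. ball k d)"
  proof
    fix x assume "x \<in> S"
    then show "x \<in> (\<Union>k\<in>S. ball k d)" using assms(2) by (intro UN_I[of x]) auto
  qed
  then show ?thesis using compactE_image[OF assms(1), of S "\<lambda>k. ball k d"] that by blast
qed

definition tent :: "real \<Rightarrow> 'a::metric_space \<Rightarrow> 'a \<Rightarrow> real" where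
  "tent d k x = max 0 (2 * d - dist x k)"

text \<open>Normalising by max d (\<Sum>_j tent d j x) rather than by the sum itself keeps the parts
  continuous; they still sum to 1 wherever some tent reaches height d, i.e. within distance d of
  the net K.\<close>

definition tent_part :: "'a::metric_space set \<Rightarrow> real \<Rightarrow> 'a \<Rightarrow> 'a \<Rightarrow> real" where
  "tent_part K d k x = tent d k x / max d (\<Sum>j\<in>K. tent d j x)"

definition tent_cover :: "'a::metric_space set \<Rightarrow> real \<Rightarrow> 'a \<Rightarrow> real" where
  "tent_cover K d x = (\<Sum>k\<in>K. tent_part K d k x)"

definition tent_tail :: "real \<Rightarrow> 'a::real_normed_vector set \<Rightarrow> real \<Rightarrow> 'a measure \<Rightarrow> real" where
  "tent_tail q K d M = (\<integral>x. (1 + norm x powr q) * (1 - tent_cover K d x) \<partial>M)"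

lemma tent_nonneg: "tent d k x \<ge> 0"
  by (simp add: tent_def)

lemma tent_sum_nonneg: "(\<Sum>j\<in>K. tent d j x) \<ge> 0"
  by (simp add: sum_nonneg tent_nonneg)

lemma tent_part_nonneg: "tent_part K d k x \<ge> 0"
  unfolding tent_part_def by (intro divide_nonneg_nonneg tent_nonneg max.coboundedI2 tent_sum_nonneg)

lemma tent_part_eq_0: "2 * d \<le> dist x k \<Longrightarrow> tent_part K d k x = 0"
  by (simp add: tent_part_def tent_def)

lemma abs_tent_part_le:
  assumes "d > 0"
  shows "\<bar>tent_part K d k x\<bar> \<le> 2"
proof -
  have "tent d k x \<le> 2 * d" unfolding tent_def using assms by simp
  also have "\<dots> \<le> 2 * max d (\<Sum>j\<in>K. tent d j x)" by simp
  finally show ?thesis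
    using assms tent_nonneg[of d k x] by (simp add: tent_part_def pos_divide_le_eq)
qed

lemma continuous_on_tent_part:
  assumes "d > 0"
  shows "continuous_on UNIV (tent_part K d k)"
proof -
  have "continuous_on UNIV (\<lambda>x. tent d k x / max d (\<Sum>j\<in>K. tent d j x))"
    unfolding tent_def using assms by (intro continuous_intros) auto
  then show ?thesis unfolding tent_part_def by simp
qed

lemma continuous_on_tent_cover: "d > 0 \<Longrightarrow> continuous_on UNIV (tent_cover K d)"
  unfolding tent_cover_def by (intro continuous_on_sum continuous_on_tent_part)

lemma tent_cover_eq: "tent_cover K d x = (\<Sum>j\<in>K. tent d j x) / max d (\<Sum>j\<in>K. tent d j x)"
  unfolding tent_cover_def tent_part_def by (simp add: sum_divide_distrib)

lemma tent_cover_nonneg: "tent_cover K d x \<ge> 0"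
  unfolding tent_cover_def by (simp add: sum_nonneg tent_part_nonneg)

lemma tent_cover_le_1:
  assumes "d > 0"
  shows "tent_cover K d x \<le> 1"
  unfolding tent_cover_eq using assms by (simp add: divide_le_eq_1 less_max_iff_disj)

lemma tent_cover_eq_1:
  assumes "d > 0" "finite K" "k \<in> K" "dist x k < d"
  shows "tent_cover K d x = 1"
proof -
  have "d \<le> tent d k x" using assms(4) unfolding tent_def by simp
  also have "\<dots> \<le> (\<Sum>j\<in>K. tent d j x)"
    using assms(2,3) by (intro member_le_sum tent_nonneg)
  finally show ?thesis using assms(1) unfolding tent_cover_eq by simp
qed

lemma tent_cover_eq_0:
  fixes x :: "'a::real_normed_vector"
  assumes "2 * d \<le> 1" "K \<subseteq> cball 0 R" "norm x \<ge> R + 1"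
  shows "tent_cover K d x = 0"
proof -
  have "tent d k x = 0" if "k \<in> K" for k
  proof -
    have "norm k \<le> R" using that assms(2) by auto
    then have "dist x k \<ge> 1" using assms(3) norm_triangle_ineq2[of x k] by (simp add: dist_norm)
    then show ?thesis using assms(1) unfolding tent_def by simp
  qed
  then show ?thesis unfolding tent_cover_eq by simp
qed

lemma integrable_tent_tail:
  fixes M :: "'a::euclidean_space measure"
  assumes "M \<in> Pq q" "d > 0"
  shows "integrable M (\<lambda>x. (1 + norm x powr q) * (1 - tent_cover K d x))"
proof (rule integrable_Pq_dominated[OF assms(1), of _ 1 1])
  have [measurable]: "tent_cover K d \<in> borel_measurable borel"
    using continuous_on_tent_cover[OF assms(2)] by (rule borel_measurable_continuous_onI)
  show "(\<lambda>x. (1 + norm x powr q) * (1 - tent_cover K d x)) \<in> borel_measurable borel"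
    by measurable
  show "\<bar>(1 + norm x powr q) * (1 - tent_cover K d x)\<bar> \<le> 1 + 1 * norm x powr q" for x
    using tent_cover_nonneg[of K d x] tent_cover_le_1[OF assms(2), of K x]
    by (simp add: abs_mult mult_left_le)
qed

lemma pseudo_lipschitz_near_net:
  fixes f :: "'a::euclidean_space \<Rightarrow> real"
  assumes "pseudo_lipschitz (q - 1) 1 f" "q \<ge> 1" "2 * d \<le> 1" "norm k \<le> R" "dist x k < 2 * d"
  shows "\<bar>f x - f k\<bar> \<le> 2 * d * (3 + 2 * (R + 1) powr q)"
proof -
  have "norm x \<le> R + 1" using assms(3-5) norm_triangle_ineq2[of x k] by (simp add: dist_norm)
  then have "\<bar>f x - f k\<bar> \<le> (3 + 2 * (R + 1) powr q) * dist x k"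
    using lipschitz_onD[OF pseudo_lipschitz_on_cball[OF assms(1,2), of "R + 1"]] assms(4)
    by (simp add: dist_real_def)
  also have "\<dots> \<le> (3 + 2 * (R + 1) powr q) * (2 * d)"
    using assms(5) by (intro mult_left_mono) (auto simp: add_nonneg_nonneg)
  finally show ?thesis by (simp add: mult_ac)
qed

lemma tent_approx_pointwise:
  fixes f :: "'a::euclidean_space \<Rightarrow> real"
  assumes f: "pseudo_lipschitz (q - 1) 1 f" and q1: "q \<ge> 1" and d: "d > 0" "2 * d \<le> 1"
    and K: "K \<subseteq> cball 0 R"
  shows "\<bar>(f x - f 0) - (\<Sum>k\<in>K. (f k - f 0) * tent_part K d k x)\<bar>
    \<le> 2 * d * (3 + 2 * (R + 1) powr q) + 3 * ((1 + norm x powr q) * (1 - tent_cover K d x))"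
proof -
  define L where "L = 3 + 2 * (R + 1) powr q"
  have "(f x - f 0) - (\<Sum>k\<in>K. (f k - f 0) * tent_part K d k x)
      = (f x - f 0) * (1 - tent_cover K d x) + (\<Sum>k\<in>K. (f x - f k) * tent_part K d k x)"
    unfolding tent_cover_def
    by (simp add: algebra_simps sum_distrib_left sum_subtractf[symmetric] sum.distrib[symmetric])
  moreover have "\<bar>(f x - f 0) * (1 - tent_cover K d x)\<bar>
      \<le> 3 * ((1 + norm x powr q) * (1 - tent_cover K d x))"
  proof -
    have "0 \<le> 1 - tent_cover K d x" using tent_cover_le_1[OF d(1), of K x] by simp
    then have "\<bar>f x - f 0\<bar> * (1 - tent_cover K d x) \<le> (3 * (1 + norm x powr q)) * (1 - tent_cover K d x)"
      using pseudo_lipschitz_growth[OF f q1, of x] by (intro mult_right_mono) auto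
    then show ?thesis
      using \<open>0 \<le> 1 - tent_cover K d x\<close> by (simp only: abs_mult abs_of_nonneg mult.assoc)
  qed
  moreover have "\<bar>\<Sum>k\<in>K. (f x - f k) * tent_part K d k x\<bar> \<le> 2 * d * L"
  proof -
    have "\<bar>(f x - f k) * tent_part K d k x\<bar> \<le> 2 * d * L * tent_part K d k x" if "k \<in> K" for k
    proof (cases "dist x k < 2 * d")
      case True
      then have "\<bar>f x - f k\<bar> \<le> 2 * d * L"
        unfolding L_def using K that by (intro pseudo_lipschitz_near_net[OF f q1 d(2)]) auto
      then show ?thesis using tent_part_nonneg[of K d k x] by (simp add: abs_mult mult_right_mono)
    qed (simp add: tent_part_eq_0)
    then have "\<bar>\<Sum>k\<in>K. (f x - f k) * tent_part K d k x\<bar> \<le> (\<Sum>k\<in>K. 2 * d * L * tent_part K d k x)"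
      by (intro order_trans[OF sum_abs sum_mono])
    also have "\<dots> = 2 * d * L * tent_cover K d x" by (simp add: tent_cover_def sum_distrib_left)
    also have "\<dots> \<le> 2 * d * L"
      using d tent_cover_le_1[OF d(1), of K x] by (intro mult_left_le) (auto simp: L_def)
    finally show ?thesis .
  qed
  ultimately show ?thesis unfolding L_def
    using abs_triangle_ineq[of "(f x - f 0) * (1 - tent_cover K d x)"] by linarith
qed

lemma tent_approx_integral:
  fixes f :: "'a::euclidean_space \<Rightarrow> real"
  assumes q1: "q \<ge> 1" and M: "M \<in> Pq q" and f: "f \<in> pLip (q - 1)" and d: "d > 0" "2 * d \<le> 1"
    and K: "finite K" "K \<subseteq> cball 0 R"
  shows "\<bar>((\<integral>x. f x \<partial>M) - f 0) - (\<Sum>k\<in>K. (f k - f 0) * (\<integral>x. tent_part K d k x \<partial>M))\<bar>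
    \<le> 2 * d * (3 + 2 * (R + 1) powr q) + 3 * tent_tail q K d M"
proof -
  define c where "c = 2 * d * (3 + 2 * (R + 1) powr q)"
  have PL: "pseudo_lipschitz (q - 1) 1 f" using f by (simp add: pLip_iff)
  have int_f: "integrable M f" using integrable_pseudo_lipschitz[OF M q1 PL] by simp
  have int_part: "integrable M (tent_part K d k)" for k
    using integrable_Pq_bounded_continuous[OF M continuous_on_tent_part[OF d(1)] abs_tent_part_le[OF d(1)]] .
  have int_const: "integrable M (\<lambda>x. c')" for c' :: real using integrable_Pq_const[OF M] .
  have "((\<integral>x. f x \<partial>M) - f 0) - (\<Sum>k\<in>K. (f k - f 0) * (\<integral>x. tent_part K d k x \<partial>M))
      = (\<integral>x. (f x - f 0) - (\<Sum>k\<in>K. (f k - f 0) * tent_part K d k x) \<partial>M)"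
    using int_f int_part int_const integral_Pq_const[OF M] by simp
  also have "\<bar>\<dots>\<bar> \<le> (\<integral>x. c + 3 * ((1 + norm x powr q) * (1 - tent_cover K d x)) \<partial>M)"
    using int_f int_part int_const integrable_tent_tail[OF M d(1)]
      tent_approx_pointwise[OF PL q1 d K(2)]
    by (intro integral_abs_bound_integral) (auto simp: c_def)
  also have "\<dots> = c + 3 * tent_tail q K d M"
    using int_const integrable_tent_tail[OF M d(1)] integral_Pq_const[OF M]
    by (simp add: tent_tail_def)
  finally show ?thesis unfolding c_def .
qed

lemma abs_integral_diff_le_tent:
  fixes f :: "'a::euclidean_space \<Rightarrow> real"
  assumes q1: "q \<ge> 1" and M: "M \<in> Pq q" and N: "N \<in> Pq q" and f: "f \<in> pLip (q - 1)"
    and d: "d > 0" "2 * d \<le> 1" and K: "finite K" "K \<subseteq> cball 0 R"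
  shows "\<bar>(\<integral>x. f x \<partial>M) - (\<integral>x. f x \<partial>N)\<bar>
    \<le> 2 * (2 * d * (3 + 2 * (R + 1) powr q)) + 3 * tent_tail q K d M + 3 * tent_tail q K d N
      + 3 * (1 + R powr q) * (\<Sum>k\<in>K. \<bar>(\<integral>x. tent_part K d k x \<partial>M) - (\<integral>x. tent_part K d k x \<partial>N)\<bar>)"
proof -
  have PL: "pseudo_lipschitz (q - 1) 1 f" using f by (simp add: pLip_iff)
  let ?\<Delta> = "\<lambda>k. (\<integral>x. tent_part K d k x \<partial>M) - (\<integral>x. tent_part K d k x \<partial>N)"
  have "\<bar>(f k - f 0) * ?\<Delta> k\<bar> \<le> 3 * (1 + R powr q) * \<bar>?\<Delta> k\<bar>" if "k \<in> K" for k
  proof -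
    have "norm k powr q \<le> R powr q" using that K(2) q1 by (auto intro!: powr_mono2)
    then have "\<bar>f k - f 0\<bar> \<le> 3 * (1 + R powr q)"
      using pseudo_lipschitz_growth[OF PL q1, of k] by simp
    then show ?thesis by (simp add: abs_mult mult_right_mono)
  qed
  then have "\<bar>\<Sum>k\<in>K. (f k - f 0) * ?\<Delta> k\<bar> \<le> 3 * (1 + R powr q) * (\<Sum>k\<in>K. \<bar>?\<Delta> k\<bar>)"
    by (auto simp: sum_distrib_left intro!: order_trans[OF sum_abs sum_mono])
  moreover have "(\<Sum>k\<in>K. (f k - f 0) * ?\<Delta> k)
      = (\<Sum>k\<in>K. (f k - f 0) * (\<integral>x. tent_part K d k x \<partial>M))
        - (\<Sum>k\<in>K. (f k - f 0) * (\<integral>x. tent_part K d k x \<partial>N))"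
    by (simp add: sum_subtractf[symmetric] right_diff_distrib)
  ultimately show ?thesis
    using tent_approx_integral[OF q1 M f d K] tent_approx_integral[OF q1 N f d K] by linarith
qed

lemma tendsto_tent_tail:
  fixes P :: "'a::euclidean_space measure"
  assumes q1: "q \<ge> 1" and P: "P \<in> Pq q" and Q: "\<And>n. Q n \<in> Pq q" and wc: "weak_conv_seq Q P"
    and mom: "(\<lambda>n. \<integral>x. norm x powr q \<partial>Q n) \<longlonglongrightarrow> (\<integral>x. norm x powr q \<partial>P)"
    and d: "d > 0" "2 * d \<le> 1" and K: "K \<subseteq> cball 0 R"
  shows "(\<lambda>n. tent_tail q K d (Q n)) \<longlonglongrightarrow> tent_tail q K d P"
proof -
  define h where "h x = (1 + norm x powr q) * tent_cover K d x" for x :: 'a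
  have "continuous_on UNIV (\<lambda>x::'a. norm x powr q)"
    using pseudo_lipschitz_continuous[OF pseudo_lipschitz_norm_powr[OF q1] q1] q1 by simp
  then have h_cont: "continuous_on UNIV h"
    unfolding h_def using continuous_on_tent_cover[OF d(1)]
    by (intro continuous_on_mult continuous_on_add continuous_on_const)
  have h_bound: "\<bar>h x\<bar> \<le> 1 + (R + 1) powr q" for x
  proof (cases "norm x \<ge> R + 1")
    case True
    then show ?thesis using tent_cover_eq_0[OF d(2) K True] by (simp add: h_def)
  next
    case False
    then have "norm x powr q \<le> (R + 1) powr q" using q1 by (intro powr_mono2) auto
    moreover have "(1 + norm x powr q) * tent_cover K d x \<le> 1 + norm x powr q"
      using tent_cover_le_1[OF d(1), of K x] by (intro mult_left_le) auto
    ultimately show ?thesis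
      using tent_cover_nonneg[of K d x] by (simp add: h_def abs_mult)
  qed
  have eq: "tent_tail q K d M = 1 + (\<integral>x. norm x powr q \<partial>M) - (\<integral>x. h x \<partial>M)" if M: "M \<in> Pq q" for M
  proof -
    have "tent_tail q K d M = (\<integral>x. (1 + norm x powr q) - h x \<partial>M)"
      unfolding tent_tail_def h_def by (simp add: algebra_simps)
    then show ?thesis
      using integrable_Pq_const[OF M] integrable_Pq_norm_powr[OF M]
        integrable_Pq_bounded_continuous[OF M h_cont h_bound]
        prob_space.prob_space[OF Pq_prob_space[OF M]] by simp
  qed
  have "(\<lambda>n. 1 + (\<integral>x. norm x powr q \<partial>Q n) - (\<integral>x. h x \<partial>Q n))
      \<longlonglongrightarrow> 1 + (\<integral>x. norm x powr q \<partial>P) - (\<integral>x. h x \<partial>P)"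
    by (intro tendsto_intros mom weak_conv_seqD[OF wc h_cont h_bound])
  then show ?thesis using eq[OF Q] eq[OF P] by simp
qed

lemma tent_tail_le_tail:
  fixes P :: "'a::euclidean_space measure"
  assumes P: "P \<in> Pq q" and d: "d > 0" and K: "finite K" "cball 0 R \<subseteq> (\<Union>k\<in>K. ball k d)"
  shows "tent_tail q K d P \<le> (\<integral>x. (if R < norm x then 1 + norm x powr q else 0) \<partial>P)"
  unfolding tent_tail_def
proof (rule integral_mono[OF integrable_tent_tail[OF P d]])
  show "integrable P (\<lambda>x. if R < norm x then 1 + norm x powr q else 0)"
    by (rule integrable_Pq_dominated[OF P, of _ 1 1]) auto
  fix x :: 'a
  show "(1 + norm x powr q) * (1 - tent_cover K d x) \<le> (if R < norm x then 1 + norm x powr q else 0)"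
  proof (cases "R < norm x")
    case True
    then show ?thesis using tent_cover_nonneg[of K d x] by (simp add: mult_left_le)
  next
    case False
    then obtain k where "k \<in> K" "dist x k < d" using K(2) by (force simp: dist_commute)
    then show ?thesis using tent_cover_eq_1[OF d K(1)] False by simp
  qed
qed

lemma tail_integral_small:
  fixes P :: "'a::euclidean_space measure"
  assumes P: "P \<in> Pq q" and e: "e > 0"
  obtains R where "(\<integral>x. (if R < norm x then 1 + norm x powr q else 0) \<partial>P) < e"
proof -
  have "(\<lambda>m. \<integral>x. (if real m < norm x then 1 + norm x powr q else 0) \<partial>P) \<longlonglongrightarrow> (\<integral>x. 0 \<partial>P)"
  proof (rule integral_dominated_convergence[where w="\<lambda>x. 1 + norm x powr q"])
    show "(\<lambda>x. if real m < norm x then 1 + norm x powr q else 0) \<in> borel_measurable P" for m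
      by (rule measurable_Pq[OF P]) measurable
    show "integrable P (\<lambda>x. 1 + norm x powr q)"
      using integrable_Pq_const[OF P] integrable_Pq_norm_powr[OF P] by simp
    show "AE x in P. (\<lambda>m. if real m < norm x then 1 + norm x powr q else 0) \<longlonglongrightarrow> 0"
    proof (rule AE_I2)
      fix x :: 'a
      obtain N :: nat where "norm x < real N" using reals_Archimedean2 by blast
      then have "eventually (\<lambda>m. (if real m < norm x then 1 + norm x powr q else 0) = 0) sequentially"
        unfolding eventually_sequentially by (intro exI[of _ N]) auto
      then show "(\<lambda>m. if real m < norm x then 1 + norm x powr q else 0) \<longlonglongrightarrow> 0"
        by (rule tendsto_eventually)
    qed
    show "AE x in P. norm (if real m < norm x then 1 + norm x powr q else 0) \<le> 1 + norm x powr q" for m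
      by (rule AE_I2) simp
  qed simp
  then have "eventually (\<lambda>m. (\<integral>x. (if real m < norm x then 1 + norm x powr q else 0) \<partial>P) < e) sequentially"
    using e by (intro order_tendstoD(2)) auto
  then obtain m where "(\<integral>x. (if real m < norm x then 1 + norm x powr q else 0) \<partial>P) < e"
    by (meson eventually_sequentially order_refl)
  then show ?thesis by (rule that)
qed

lemma tendsto_d_pLip_of_weak_conv:
  fixes P :: "'a::euclidean_space measure"
  assumes q1: "q \<ge> 1" and P: "P \<in> Pq q" and Q: "\<And>n. Q n \<in> Pq q" and wc: "weak_conv_seq Q P"
    and mom: "(\<lambda>n. \<integral>x. norm x powr q \<partial>Q n) \<longlonglongrightarrow> (\<integral>x. norm x powr q \<partial>P)"
  shows "(\<lambda>n. d_pLip (q - 1) (Q n) P) \<longlonglongrightarrow> 0"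
proof (rule order_tendstoI)
  fix a :: real assume "a < 0"
  then have "a < d_pLip (q - 1) (Q n) P" for n using d_pLip_nonneg[OF Q P q1, of n] by linarith
  then show "eventually (\<lambda>n. a < d_pLip (q - 1) (Q n) P) sequentially" by simp
next
  fix r :: real assume "0 < r"
  define e where "e = r / 8"
  have e: "e > 0" using \<open>0 < r\<close> by (simp add: e_def)
  obtain R where R: "(\<integral>x. (if R < norm x then 1 + norm x powr q else 0) \<partial>P) < e"
    using tail_integral_small[OF P e] by blast
  define L where "L = 3 + 2 * (R + 1) powr q"
  have L: "L > 0" unfolding L_def by (simp add: add_pos_nonneg)
  define d where "d = min (1 / 2) (e / (4 * L))"
  have d: "d > 0" "2 * d \<le> 1" using e L by (auto simp: d_def)
  have "d \<le> e / (4 * L)" by (simp add: d_def)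
  then have dL: "2 * (2 * d * L) \<le> e" using L by (simp add: pos_le_divide_eq mult_ac)
  obtain K :: "'a set" where K: "K \<subseteq> cball 0 R" "finite K" "cball 0 R \<subseteq> (\<Union>k\<in>K. ball k d)"
    using compact_finite_net[OF compact_cball d(1)] by blast
  define D where "D n = (\<Sum>k\<in>K. \<bar>(\<integral>x. tent_part K d k x \<partial>Q n) - (\<integral>x. tent_part K d k x \<partial>P)\<bar>)" for n
  define B where "B n = 2 * (2 * d * L) + 3 * tent_tail q K d (Q n) + 3 * tent_tail q K d P
    + 3 * (1 + R powr q) * D n" for n
  have bound: "d_pLip (q - 1) (Q n) P \<le> B n" for n
    unfolding B_def D_def L_def by (intro d_pLip_le abs_integral_diff_le_tent[OF q1 Q P _ d K(2,1)])
  have "D \<longlonglongrightarrow> (\<Sum>k\<in>K. \<bar>(\<integral>x. tent_part K d k x \<partial>P) - (\<integral>x. tent_part K d k x \<partial>P)\<bar>)"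
    unfolding D_def using weak_conv_seqD[OF wc continuous_on_tent_part abs_tent_part_le] d(1)
    by (intro tendsto_intros) auto
  then have "B \<longlonglongrightarrow> 2 * (2 * d * L) + 3 * tent_tail q K d P + 3 * tent_tail q K d P + 3 * (1 + R powr q) * 0"
    unfolding B_def by (intro tendsto_intros tendsto_tent_tail[OF q1 P Q wc mom d K(1)]) simp
  moreover have "tent_tail q K d P < e"
    using tent_tail_le_tail[OF P d(1) K(2,3)] R by linarith
  then have "2 * (2 * d * L) + 3 * tent_tail q K d P + 3 * tent_tail q K d P + 3 * (1 + R powr q) * 0 < r"
    using dL \<open>0 < r\<close> unfolding e_def by linarith
  ultimately have "eventually (\<lambda>n. B n < r) sequentially" by (rule order_tendstoD(2))
  then show "eventually (\<lambda>n. d_pLip (q - 1) (Q n) P < r) sequentially"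
    by (rule eventually_mono) (use bound in \<open>rule le_less_trans\<close>)
qed

theorem mainTheorem2:
  fixes q :: real and P :: "'a::euclidean_space measure" and Q :: "nat \<Rightarrow> 'a measure"
  assumes "q \<ge> 1" and "P \<in> Pq q" and "\<And>n. Q n \<in> Pq q"
  shows "(\<lambda>n. d_pLip (q - 1) (Q n) P) \<longlonglongrightarrow> 0 \<longleftrightarrow>
         (weak_conv_seq Q P \<and>
          (\<lambda>n. \<integral>x. norm x powr q \<partial>(Q n)) \<longlonglongrightarrow> (\<integral>x. norm x powr q \<partial>P))"
proof
  assume "(\<lambda>n. d_pLip (q - 1) (Q n) P) \<longlonglongrightarrow> 0"
  with assms show "weak_conv_seq Q P \<and>
      (\<lambda>n. \<integral>x. norm x powr q \<partial>(Q n)) \<longlonglongrightarrow> (\<integral>x. norm x powr q \<partial>P)"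
    by (simp add: weak_conv_of_d_pLip tendsto_moment_of_d_pLip)
next
  assume "weak_conv_seq Q P \<and>
      (\<lambda>n. \<integral>x. norm x powr q \<partial>(Q n)) \<longlonglongrightarrow> (\<integral>x. norm x powr q \<partial>P)"
  with assms show "(\<lambda>n. d_pLip (q - 1) (Q n) P) \<longlonglongrightarrow> 0"
    by (simp add: tendsto_d_pLip_of_weak_conv)
qed

end
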